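(* Let $\{\mathbb{G}_n,\ n=2,3,\ldots\}$ be a sequence of random graphs as described in the context, with $\lim_{n\to\infty}|V_n|=\infty$, and assume the homogeneity condition: for each $n$, $D_{n,k}$ has the same distribution as $D_{n,1}$ for all $k\in V_n$, and for all distinct $k,\ell\in V_n$ the pair $(D_{n,k},D_{n,\ell})$ has the same joint distribution as $(D_{n,1},D_{n,2})$. Fix $d\in\{0,1,2,\ldots\}$. Then there exists a constant $L(d)\in\mathbb{R}$ with $P_n(d)\to L(d)$ in probability as $n\to\infty$ if and only if $$\lim_{n\to\infty}\mathbb{P}[D_{n,1}=d]=L(d)\quad\text{and}\quad \lim_{n\to\infty}\mathrm{Cov}\big[\mathbf{1}[D_{n,1}=d],\mathbf{1}[D_{n,2}=d]\big]=0.$$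
   Context: All random variables are defined on a common probability space $(\Omega,\mathcal{F},\mathbb{P})$. For each $n=2,3,\ldots$, $\mathbb{G}_n$ is a random (possibly directed, self-loops allowed) graph on the deterministic finite node set $V_n=\{1,\ldots,k_n\}$ with $k_n\ge 2$, determined by $\{0,1\}$-valued edge random variables $\{\chi_n(k,\ell),\ k,\ell\in V_n\}$ ($\chi_n(k,\ell)=1$ iff there is an edge from $k$ to $\ell$). The degree of node $k$ is $D_{n,k}=\sum_{\ell\in V_n}\chi_n(k,\ell)$. For $d=0,1,\ldots$, $N_n(d)=\sum_{k\in V_n}\mathbf{1}[D_{n,k}=d]$ and $P_n(d)=N_n(d)/|V_n|$ is the fraction of nodes with degree $d$. *)

theory Defs
  imports "HOL-Probability.Probability"
begin

definition nodes :: "(nat \<Rightarrow> nat) \<Rightarrow> nat \<Rightarrow> nat set" where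
  "nodes kn n = {1..kn n}"

definition degree :: "(nat \<Rightarrow> nat) \<Rightarrow> (nat \<Rightarrow> nat \<Rightarrow> nat \<Rightarrow> 'a \<Rightarrow> bool) \<Rightarrow> nat \<Rightarrow> nat \<Rightarrow> 'a \<Rightarrow> nat" where
  "degree kn chi n k \<omega> = (\<Sum>l\<in>nodes kn n. if chi n k l \<omega> then 1 else 0)"

definition count_deg :: "(nat \<Rightarrow> nat) \<Rightarrow> (nat \<Rightarrow> nat \<Rightarrow> nat \<Rightarrow> 'a \<Rightarrow> bool) \<Rightarrow> nat \<Rightarrow> nat \<Rightarrow> 'a \<Rightarrow> nat" where
  "count_deg kn chi n d \<omega> = (\<Sum>k\<in>nodes kn n. if degree kn chi n k \<omega> = d then 1 else 0)"

definition frac_deg :: "(nat \<Rightarrow> nat) \<Rightarrow> (nat \<Rightarrow> nat \<Rightarrow> nat \<Rightarrow> 'a \<Rightarrow> bool) \<Rightarrow> nat \<Rightarrow> nat \<Rightarrow> 'a \<Rightarrow> real" where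
  "frac_deg kn chi n d \<omega> = real (count_deg kn chi n d \<omega>) / real (card (nodes kn n))"

definition covariance :: "'a measure \<Rightarrow> ('a \<Rightarrow> real) \<Rightarrow> ('a \<Rightarrow> real) \<Rightarrow> real" where
  "covariance M X Y =
     (\<integral>\<omega>. (X \<omega> - (\<integral>\<omega>'. X \<omega>' \<partial>M)) * (Y \<omega> - (\<integral>\<omega>'. Y \<omega>' \<partial>M)) \<partial>M)"

definition ind_eq :: "('a \<Rightarrow> nat) \<Rightarrow> nat \<Rightarrow> 'a \<Rightarrow> real" where
  "ind_eq X d \<omega> = (if X \<omega> = d then 1 else 0)"

definition conv_in_prob :: "'a measure \<Rightarrow> (nat \<Rightarrow> 'a \<Rightarrow> real) \<Rightarrow> real \<Rightarrow> bool" where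
  "conv_in_prob M X c \<longleftrightarrow>
     (\<forall>\<epsilon>>0. (\<lambda>n. measure M {\<omega> \<in> space M. \<bar>X n \<omega> - c\<bar> > \<epsilon>}) \<longlonglongrightarrow> 0)"

end

(*
  P_n(d) is the average of the k_n indicators 1[D_{n,k} = d]; by homogeneity they all have mean
  p_n = P[D_{n,1} = d] and all distinct pairs have the product mean of the pair (1, 2), so
    E[(P_n(d) - L)^2] = p_n (1 - p_n) / k_n + (1 - 1/k_n) Cov_n + (p_n - L)^2,
  where the first two terms form the variance of P_n(d) and are therefore nonnegative.
  Since 0 <= P_n(d) <= 1, convergence in probability to L is equivalent to convergence in mean
  square, and as k_n tends to infinity the right-hand side tends to 0 iff p_n -> L and Cov_n -> 0.
*)
theory Submission
  imports Defs
begin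

lemma (in prob_space) measure_abs_gt_le_mean_square:
  fixes Y :: "'a \<Rightarrow> real"
  assumes [measurable]: "Y \<in> borel_measurable M" and "integrable M (\<lambda>\<omega>. (Y \<omega>)\<^sup>2)" and "\<epsilon> > 0"
  shows "prob {\<omega> \<in> space M. \<bar>Y \<omega>\<bar> > \<epsilon>} \<le> expectation (\<lambda>\<omega>. (Y \<omega>)\<^sup>2) / \<epsilon>\<^sup>2"
proof -
  have "{\<omega> \<in> space M. \<bar>Y \<omega>\<bar> > \<epsilon>} \<subseteq> {\<omega> \<in> space M. (Y \<omega>)\<^sup>2 \<ge> \<epsilon>\<^sup>2}"
    using \<open>\<epsilon> > 0\<close> by (auto simp: abs_le_square_iff[symmetric])
  then have "prob {\<omega> \<in> space M. \<bar>Y \<omega>\<bar> > \<epsilon>} \<le> prob {\<omega> \<in> space M. (Y \<omega>)\<^sup>2 \<ge> \<epsilon>\<^sup>2}"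
    by (intro finite_measure_mono) measurable
  also have "\<dots> \<le> expectation (\<lambda>\<omega>. (Y \<omega>)\<^sup>2) / \<epsilon>\<^sup>2"
    using assms by (intro integral_Markov_inequality_measure[where A = "space M"]) auto
  finally show ?thesis .
qed

lemma (in finite_measure) integrable_square_if_abs_bounded:
  fixes Y :: "'a \<Rightarrow> real"
  assumes "Y \<in> borel_measurable M" and "\<And>\<omega>. \<bar>Y \<omega>\<bar> \<le> B"
  shows "integrable M (\<lambda>\<omega>. (Y \<omega>)\<^sup>2)"
proof (rule integrable_const_bound[where B = "B\<^sup>2"])
  have "(Y \<omega>)\<^sup>2 \<le> B\<^sup>2" for \<omega>
    using assms(2)[of \<omega>] abs_le_square_iff[of "Y \<omega>" B] by simp
  then show "AE \<omega> in M. norm ((Y \<omega>)\<^sup>2) \<le> B\<^sup>2"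
    by simp
qed (use assms(1) in simp)

lemma (in prob_space) mean_square_le_if_abs_bounded:
  fixes Y :: "'a \<Rightarrow> real"
  assumes [measurable]: "Y \<in> borel_measurable M" and bound: "\<And>\<omega>. \<bar>Y \<omega>\<bar> \<le> B"
  shows "expectation (\<lambda>\<omega>. (Y \<omega>)\<^sup>2) \<le> \<epsilon>\<^sup>2 + B\<^sup>2 * prob {\<omega> \<in> space M. \<bar>Y \<omega>\<bar> > \<epsilon>}"
proof -
  let ?A = "{\<omega> \<in> space M. \<bar>Y \<omega>\<bar> > \<epsilon>}"
  have "?A \<in> events" by measurable
  then have int_A: "integrable M (indicator ?A :: 'a \<Rightarrow> real)"
    by (simp add: emeasure_eq_measure)
  have "expectation (\<lambda>\<omega>. (Y \<omega>)\<^sup>2) \<le> expectation (\<lambda>\<omega>. \<epsilon>\<^sup>2 + B\<^sup>2 * indicator ?A \<omega>)"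
  proof (rule integral_mono)
    show "integrable M (\<lambda>\<omega>. (Y \<omega>)\<^sup>2)"
      using bound by (rule integrable_square_if_abs_bounded[rotated]) simp
    show "integrable M (\<lambda>\<omega>. \<epsilon>\<^sup>2 + B\<^sup>2 * indicator ?A \<omega>)"
      using int_A by simp
    fix \<omega> assume "\<omega> \<in> space M"
    then show "(Y \<omega>)\<^sup>2 \<le> \<epsilon>\<^sup>2 + B\<^sup>2 * indicator ?A \<omega>"
      using bound[of \<omega>] abs_le_square_iff[of "Y \<omega>" B] abs_le_square_iff[of "Y \<omega>" \<epsilon>]
      by (cases "\<omega> \<in> ?A") (auto simp: add_increasing)
  qed
  also have "\<dots> = \<epsilon>\<^sup>2 + B\<^sup>2 * prob ?A"
    using int_A \<open>?A \<in> events\<close> by (simp add: prob_space)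
  finally show ?thesis .
qed

lemma (in prob_space) conv_in_prob_iff_mean_square_tendsto:
  fixes X :: "nat \<Rightarrow> 'a \<Rightarrow> real"
  assumes bounded: "\<forall>\<^sub>F n in sequentially. X n \<in> borel_measurable M \<and> (\<forall>\<omega>. \<bar>X n \<omega> - c\<bar> \<le> B)"
  shows "conv_in_prob M X c \<longleftrightarrow> (\<lambda>n. expectation (\<lambda>\<omega>. (X n \<omega> - c)\<^sup>2)) \<longlonglongrightarrow> 0"
proof
  assume conv: "conv_in_prob M X c"
  show "(\<lambda>n. expectation (\<lambda>\<omega>. (X n \<omega> - c)\<^sup>2)) \<longlonglongrightarrow> 0"
  proof (rule order_tendstoI)
    fix a :: real assume "a < 0"
    have "0 \<le> expectation (\<lambda>\<omega>. (X n \<omega> - c)\<^sup>2)" for n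
      by simp
    with \<open>a < 0\<close> show "\<forall>\<^sub>F n in sequentially. a < expectation (\<lambda>\<omega>. (X n \<omega> - c)\<^sup>2)"
      by (intro always_eventually allI) (blast intro: less_le_trans)
  next
    fix a :: real assume "0 < a"
    define \<epsilon> where "\<epsilon> = sqrt (a / 2)"
    have "\<epsilon> > 0" and "\<epsilon>\<^sup>2 = a / 2" using \<open>0 < a\<close> by (auto simp: \<epsilon>_def)
    then have "(\<lambda>n. prob {\<omega> \<in> space M. \<bar>X n \<omega> - c\<bar> > \<epsilon>}) \<longlonglongrightarrow> 0"
      using conv unfolding conv_in_prob_def by blast
    then have "(\<lambda>n. B\<^sup>2 * prob {\<omega> \<in> space M. \<bar>X n \<omega> - c\<bar> > \<epsilon>}) \<longlonglongrightarrow> B\<^sup>2 * 0"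
      by (intro tendsto_mult tendsto_const)
    then have "\<forall>\<^sub>F n in sequentially. B\<^sup>2 * prob {\<omega> \<in> space M. \<bar>X n \<omega> - c\<bar> > \<epsilon>} < a / 2"
      using \<open>0 < a\<close> by (intro order_tendstoD) auto
    with bounded show "\<forall>\<^sub>F n in sequentially. expectation (\<lambda>\<omega>. (X n \<omega> - c)\<^sup>2) < a"
    proof eventually_elim
      case (elim n)
      then have "expectation (\<lambda>\<omega>. (X n \<omega> - c)\<^sup>2)
          \<le> \<epsilon>\<^sup>2 + B\<^sup>2 * prob {\<omega> \<in> space M. \<bar>X n \<omega> - c\<bar> > \<epsilon>}"
        by (intro mean_square_le_if_abs_bounded) auto
      then show ?case using elim \<open>\<epsilon>\<^sup>2 = a / 2\<close> by linarith
    qed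
  qed
next
  assume mean_square: "(\<lambda>n. expectation (\<lambda>\<omega>. (X n \<omega> - c)\<^sup>2)) \<longlonglongrightarrow> 0"
  show "conv_in_prob M X c"
    unfolding conv_in_prob_def
  proof (intro allI impI)
    fix \<epsilon> :: real assume "\<epsilon> > 0"
    have "(\<lambda>n. expectation (\<lambda>\<omega>. (X n \<omega> - c)\<^sup>2) / \<epsilon>\<^sup>2) \<longlonglongrightarrow> 0 / \<epsilon>\<^sup>2"
      by (intro tendsto_divide mean_square tendsto_const) (use \<open>\<epsilon> > 0\<close> in auto)
    then have majorant: "(\<lambda>n. expectation (\<lambda>\<omega>. (X n \<omega> - c)\<^sup>2) / \<epsilon>\<^sup>2) \<longlonglongrightarrow> 0"
      by simp
    have dominated: "\<forall>\<^sub>F n in sequentially.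
        prob {\<omega> \<in> space M. \<bar>X n \<omega> - c\<bar> > \<epsilon>} \<le> expectation (\<lambda>\<omega>. (X n \<omega> - c)\<^sup>2) / \<epsilon>\<^sup>2"
      using bounded
    proof eventually_elim
      case (elim n)
      then have "integrable M (\<lambda>\<omega>. (X n \<omega> - c)\<^sup>2)"
        by (intro integrable_square_if_abs_bounded) auto
      then show ?case
        using elim \<open>\<epsilon> > 0\<close> by (intro measure_abs_gt_le_mean_square) auto
    qed
    show "(\<lambda>n. prob {\<omega> \<in> space M. \<bar>X n \<omega> - c\<bar> > \<epsilon>}) \<longlonglongrightarrow> 0"
      by (rule tendsto_sandwich[OF _ dominated tendsto_const majorant]) simp
  qed
qed

lemma abs_minus_square_le_1:
  fixes x :: real
  assumes "0 \<le> x" and "x \<le> 1"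
  shows "\<bar>x - x\<^sup>2\<bar> \<le> 1"
  using assms mult_left_le[of x x] mult_nonneg_nonneg[of x x]
  unfolding abs_le_iff power2_eq_square by linarith

lemma tendsto_bias_variance_iff:
  fixes e w v c p :: "nat \<Rightarrow> real"
  assumes decomp: "\<forall>\<^sub>F n in sequentially. e n = w n * v n + (1 - w n) * c n + (p n - L)\<^sup>2"
    and nonneg: "\<forall>\<^sub>F n in sequentially. 0 \<le> w n * v n + (1 - w n) * c n"
    and w: "w \<longlonglongrightarrow> 0" and v: "\<And>n. \<bar>v n\<bar> \<le> B"
  shows "e \<longlonglongrightarrow> 0 \<longleftrightarrow> p \<longlonglongrightarrow> L \<and> c \<longlonglongrightarrow> 0"
proof -
  have "Bfun v sequentially"
    using v by (intro BfunI[where K = B]) simp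
  then have "Zfun (\<lambda>n. v n * w n) sequentially"
    using w by (intro bounded_bilinear.Bfun_prod_Zfun[OF bounded_bilinear_mult])
      (simp_all add: tendsto_Zfun_iff)
  then have a: "(\<lambda>n. w n * v n) \<longlonglongrightarrow> 0"
    by (simp add: tendsto_Zfun_iff mult.commute)
  have b: "(\<lambda>n. 1 - w n) \<longlonglongrightarrow> 1"
    using tendsto_diff[OF tendsto_const w, of 1] by simp
  show ?thesis
  proof
    assume e: "e \<longlonglongrightarrow> 0"
    have "\<forall>\<^sub>F n in sequentially. (p n - L)\<^sup>2 \<le> e n"
      using decomp nonneg by eventually_elim simp
    then have bias: "(\<lambda>n. (p n - L)\<^sup>2) \<longlonglongrightarrow> 0"
      by (intro tendsto_sandwich[OF _ _ tendsto_const e]) auto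
    then have "(\<lambda>n. sqrt ((p n - L)\<^sup>2)) \<longlonglongrightarrow> sqrt 0"
      by (intro tendsto_real_sqrt)
    then have "p \<longlonglongrightarrow> L"
      by (simp add: tendsto_rabs_zero_iff LIM_zero_iff)
    moreover have "(\<lambda>n. (e n - (p n - L)\<^sup>2 - w n * v n) / (1 - w n)) \<longlonglongrightarrow> (0 - 0 - 0) / 1"
      by (intro tendsto_divide tendsto_diff e bias a b) simp
    moreover have "\<forall>\<^sub>F n in sequentially. (e n - (p n - L)\<^sup>2 - w n * v n) / (1 - w n) = c n"
      using decomp tendsto_imp_eventually_ne[OF b zero_neq_one[symmetric]]
      by eventually_elim simp
    ultimately show "p \<longlonglongrightarrow> L \<and> c \<longlonglongrightarrow> 0"
      by (simp add: tendsto_cong)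
  next
    assume "p \<longlonglongrightarrow> L \<and> c \<longlonglongrightarrow> 0"
    then have "(\<lambda>n. w n * v n + (1 - w n) * c n + (p n - L)\<^sup>2) \<longlonglongrightarrow> 0 + 1 * 0 + (L - L)\<^sup>2"
      by (intro tendsto_add tendsto_mult tendsto_power tendsto_diff a b tendsto_const) auto
    then show "e \<longlonglongrightarrow> 0"
      using decomp by (simp add: tendsto_cong)
  qed
qed

lemma integral_comp_eq_if_distr_eq:
  fixes g :: "'b \<Rightarrow> real"
  assumes "X \<in> measurable M N" and "Y \<in> measurable M N" and "g \<in> borel_measurable N"
    and "distr M N X = distr M N Y"
  shows "(\<integral>\<omega>. g (X \<omega>) \<partial>M) = (\<integral>\<omega>. g (Y \<omega>) \<partial>M)"
  using assms by (metis integral_distr)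

lemma (in prob_space) covariance_eq_expectation_product:
  assumes "integrable M X" and "integrable M Y" and "integrable M (\<lambda>\<omega>. X \<omega> * Y \<omega>)"
  shows "covariance M X Y = expectation (\<lambda>\<omega>. X \<omega> * Y \<omega>) - expectation X * expectation Y"
proof -
  let ?EX = "expectation X" and ?EY = "expectation Y"
  have "covariance M X Y = expectation (\<lambda>\<omega>. X \<omega> * Y \<omega> - ?EY * X \<omega> - ?EX * Y \<omega> + ?EX * ?EY)"
    unfolding covariance_def by (rule Bochner_Integration.integral_cong) (auto simp: algebra_simps)
  also have "\<dots> = expectation (\<lambda>\<omega>. X \<omega> * Y \<omega>) - ?EX * ?EY"
    using assms by (simp add: prob_space)
  finally show ?thesis .
qed

lemma ind_eq_measurable [measurable]:
  "X \<in> measurable M (count_space UNIV) \<Longrightarrow> ind_eq X d \<in> borel_measurable M"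
  unfolding ind_eq_def by measurable

lemma integral_ind_eq: "integral\<^sup>L M (ind_eq X d) = measure M {\<omega> \<in> space M. X \<omega> = d}"
proof -
  have "integral\<^sup>L M (ind_eq X d) = integral\<^sup>L M (indicator {\<omega> \<in> space M. X \<omega> = d})"
    by (rule Bochner_Integration.integral_cong) (auto simp: ind_eq_def)
  then show ?thesis
    by (simp add: Int_absorb2)
qed

lemma abs_ind_eq_le_1: "\<bar>ind_eq X d \<omega>\<bar> \<le> 1"
  by (simp add: ind_eq_def)

lemma ind_eq_mult_self: "ind_eq X d \<omega> * ind_eq X d \<omega> = ind_eq X d \<omega>"
  by (simp add: ind_eq_def)

lemma (in prob_space) mean_square_deviation_of_average:
  fixes X :: "'i \<Rightarrow> 'a \<Rightarrow> real"
  assumes "finite N" and "N \<noteq> {}"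
    and meas: "\<And>k. k \<in> N \<Longrightarrow> X k \<in> borel_measurable M"
    and bounded: "\<And>k \<omega>. k \<in> N \<Longrightarrow> \<bar>X k \<omega>\<bar> \<le> B"
    and mean: "\<And>k. k \<in> N \<Longrightarrow> expectation (X k) = m"
    and second_moment: "\<And>k. k \<in> N \<Longrightarrow> expectation (\<lambda>\<omega>. X k \<omega> * X k \<omega>) = s"
    and mixed_moment: "\<And>k l. k \<in> N \<Longrightarrow> l \<in> N \<Longrightarrow> k \<noteq> l \<Longrightarrow> expectation (\<lambda>\<omega>. X k \<omega> * X l \<omega>) = q"
  shows "expectation (\<lambda>\<omega>. ((\<Sum>k\<in>N. X k \<omega>) / card N - c)\<^sup>2)
    = (s - q) / card N + (q - m\<^sup>2) + (m - c)\<^sup>2"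
proof -
  define K where "K = real (card N)"
  have "K > 0" using assms(1,2) by (simp add: K_def card_gt_0_iff)
  have int_X: "integrable M (X k)" if "k \<in> N" for k
    using meas bounded that by (intro integrable_const_bound[where B = B]) auto
  have int_XX: "integrable M (\<lambda>\<omega>. X k \<omega> * X l \<omega>)" if "k \<in> N" "l \<in> N" for k l
  proof (rule integrable_const_bound[where B = "B * B"])
    show "AE \<omega> in M. norm (X k \<omega> * X l \<omega>) \<le> B * B"
      using bounded that by (auto simp: abs_mult intro!: mult_mono order_trans[OF abs_ge_zero])
  qed (use meas that in simp)
  have row_sum: "(\<Sum>l\<in>N. expectation (\<lambda>\<omega>. X k \<omega> * X l \<omega>)) = s + (K - 1) * q" if "k \<in> N" for k
  proof -
    have "(\<Sum>l\<in>N. expectation (\<lambda>\<omega>. X k \<omega> * X l \<omega>)) = (\<Sum>l\<in>N. q + (if l = k then s - q else 0))"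
      using second_moment mixed_moment that by (intro sum.cong) auto
    also have "\<dots> = K * q + (s - q)"
      using \<open>finite N\<close> that by (simp add: sum.distrib K_def)
    finally show ?thesis by (simp add: algebra_simps)
  qed
  have expand: "((\<Sum>k\<in>N. X k \<omega>) / K - c)\<^sup>2
      = (\<Sum>k\<in>N. \<Sum>l\<in>N. X k \<omega> * X l \<omega>) / K\<^sup>2 - 2 * c / K * (\<Sum>k\<in>N. X k \<omega>) + c\<^sup>2" for \<omega>
    using \<open>K > 0\<close> by (simp add: sum_product[symmetric] power2_eq_square field_simps)
  have "expectation (\<lambda>\<omega>. ((\<Sum>k\<in>N. X k \<omega>) / K - c)\<^sup>2)
      = (\<Sum>k\<in>N. \<Sum>l\<in>N. expectation (\<lambda>\<omega>. X k \<omega> * X l \<omega>)) / K\<^sup>2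
        - 2 * c / K * (\<Sum>k\<in>N. expectation (X k)) + c\<^sup>2"
    unfolding expand using int_X int_XX
    by (simp add: Bochner_Integration.integral_diff Bochner_Integration.integral_add
        Bochner_Integration.integral_sum integrable_sum prob_space)
  also have "\<dots> = K * (s + (K - 1) * q) / K\<^sup>2 - 2 * c / K * (K * m) + c\<^sup>2"
    using row_sum mean by (simp add: K_def)
  also have "\<dots> = (s - q) / K + (q - m\<^sup>2) + (m - c)\<^sup>2"
    using \<open>K > 0\<close> by (simp add: field_simps power2_eq_square)
  finally show ?thesis by (simp add: K_def)
qed

lemma frac_deg_eq_average:
  "frac_deg kn chi n d \<omega> = (\<Sum>k\<in>nodes kn n. ind_eq (degree kn chi n k) d \<omega>) / card (nodes kn n)"
proof -
  have "real (count_deg kn chi n d \<omega>) = (\<Sum>k\<in>nodes kn n. ind_eq (degree kn chi n k) d \<omega>)"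
    unfolding count_deg_def ind_eq_def of_nat_sum by (intro sum.cong) auto
  then show ?thesis by (simp add: frac_deg_def)
qed

lemma frac_deg_bounds: "0 \<le> frac_deg kn chi n d \<omega> \<and> frac_deg kn chi n d \<omega> \<le> 1"
proof -
  have "count_deg kn chi n d \<omega> \<le> card (nodes kn n)"
    unfolding count_deg_def using sum_mono[of "nodes kn n" _ "\<lambda>_. 1::nat"] by fastforce
  then show ?thesis
    by (cases "card (nodes kn n) = 0") (simp_all add: frac_deg_def divide_le_eq_1)
qed

lemma abs_frac_deg_minus_le: "\<bar>frac_deg kn chi n d \<omega> - c\<bar> \<le> 1 + \<bar>c\<bar>"
  using frac_deg_bounds[of kn chi n d \<omega>] by (auto simp: abs_if)

locale homogeneous_degrees = prob_space M for M :: "'a measure" +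
  fixes kn :: "nat \<Rightarrow> nat" and chi :: "nat \<Rightarrow> nat \<Rightarrow> nat \<Rightarrow> 'a \<Rightarrow> bool" and n :: nat
  assumes edge_measurable: "\<And>k l. k \<in> nodes kn n \<Longrightarrow> l \<in> nodes kn n \<Longrightarrow>
      chi n k l \<in> measurable M (count_space UNIV)"
    and two_le_nodes: "2 \<le> kn n"
    and degree_distr: "\<And>k. k \<in> nodes kn n \<Longrightarrow>
      distr M (count_space UNIV) (degree kn chi n k) = distr M (count_space UNIV) (degree kn chi n 1)"
    and degree_pair_distr: "\<And>k l. k \<in> nodes kn n \<Longrightarrow> l \<in> nodes kn n \<Longrightarrow> k \<noteq> l \<Longrightarrow>
      distr M (count_space UNIV) (\<lambda>\<omega>. (degree kn chi n k \<omega>, degree kn chi n l \<omega>))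
      = distr M (count_space UNIV) (\<lambda>\<omega>. (degree kn chi n 1 \<omega>, degree kn chi n 2 \<omega>))"
begin

lemma one_two_in_nodes: "1 \<in> nodes kn n" "2 \<in> nodes kn n"
  using two_le_nodes by (auto simp: nodes_def)

lemma degree_measurable:
  assumes "k \<in> nodes kn n"
  shows "degree kn chi n k \<in> measurable M (count_space UNIV)"
  unfolding degree_def
proof (rule measurable_sum_nat)
  fix l assume "l \<in> nodes kn n"
  then have [measurable]: "Measurable.pred M (chi n k l)"
    using edge_measurable[OF assms] by (simp add: pred_def)
  show "(\<lambda>\<omega>. if chi n k l \<omega> then 1 else 0 :: nat) \<in> measurable M (count_space UNIV)"
    by measurable
qed

lemma degree_pair_measurable:
  assumes "k \<in> nodes kn n" and "l \<in> nodes kn n"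
  shows "(\<lambda>\<omega>. (degree kn chi n k \<omega>, degree kn chi n l \<omega>)) \<in> measurable M (count_space UNIV)"
  using measurable_Pair[OF degree_measurable[OF assms(1)] degree_measurable[OF assms(2)]]
  by (simp add: pair_measure_countable)

lemma frac_deg_measurable: "frac_deg kn chi n d \<in> borel_measurable M"
  unfolding frac_deg_eq_average[abs_def]
  by (intro borel_measurable_divide borel_measurable_sum borel_measurable_const
      ind_eq_measurable degree_measurable)

lemma expectation_ind_degree:
  assumes "k \<in> nodes kn n"
  shows "expectation (ind_eq (degree kn chi n k) d) = prob {\<omega> \<in> space M. degree kn chi n 1 \<omega> = d}"
proof -
  have "expectation (ind_eq (degree kn chi n k) d) = expectation (ind_eq (degree kn chi n 1) d)"
    using integral_comp_eq_if_distr_eq[OF degree_measurable[OF assms]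
        degree_measurable[OF one_two_in_nodes(1)], of "\<lambda>x. if x = d then 1 else 0"]
      degree_distr[OF assms]
    by (simp add: ind_eq_def[abs_def])
  then show ?thesis
    by (simp add: integral_ind_eq)
qed

lemma expectation_ind_degree_pair:
  assumes "k \<in> nodes kn n" and "l \<in> nodes kn n" and "k \<noteq> l"
  shows "expectation (\<lambda>\<omega>. ind_eq (degree kn chi n k) d \<omega> * ind_eq (degree kn chi n l) d \<omega>)
    = expectation (\<lambda>\<omega>. ind_eq (degree kn chi n 1) d \<omega> * ind_eq (degree kn chi n 2) d \<omega>)"
  using integral_comp_eq_if_distr_eq[OF degree_pair_measurable[OF assms(1,2)]
      degree_pair_measurable[OF one_two_in_nodes], of "\<lambda>(x, y). (if x = d then 1 else 0) * (if y = d then 1 else 0)"]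
    degree_pair_distr[OF assms]
  by (simp add: ind_eq_def)

lemma mean_square_frac_deg:
  fixes d :: nat and c :: real
  defines "p \<equiv> prob {\<omega> \<in> space M. degree kn chi n 1 \<omega> = d}"
  shows "expectation (\<lambda>\<omega>. (frac_deg kn chi n d \<omega> - c)\<^sup>2)
    = 1 / kn n * (p - p\<^sup>2)
      + (1 - 1 / kn n) * covariance M (ind_eq (degree kn chi n 1) d) (ind_eq (degree kn chi n 2) d)
      + (p - c)\<^sup>2"
proof -
  let ?I = "\<lambda>k. ind_eq (degree kn chi n k) d"
  define q where "q = expectation (\<lambda>\<omega>. ?I 1 \<omega> * ?I 2 \<omega>)"
  have I_measurable: "?I k \<in> borel_measurable M" if "k \<in> nodes kn n" for k
    using degree_measurable[OF that] by measurable
  have I_integrable: "integrable M (?I k)" if "k \<in> nodes kn n" for k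
    by (intro integrable_const_bound[where B = 1] I_measurable[OF that]) (simp add: abs_ind_eq_le_1)
  have I_mean: "expectation (?I k) = p" if "k \<in> nodes kn n" for k
    using expectation_ind_degree[OF that] by (simp add: p_def)
  have cov: "covariance M (?I 1) (?I 2) = q - p\<^sup>2"
  proof -
    have "integrable M (\<lambda>\<omega>. ?I 1 \<omega> * ?I 2 \<omega>)"
      using one_two_in_nodes
      by (intro integrable_const_bound[where B = 1] borel_measurable_times I_measurable)
        (auto simp: ind_eq_def)
    then show ?thesis
      using one_two_in_nodes
      by (subst covariance_eq_expectation_product) (auto simp: I_integrable I_mean q_def power2_eq_square)
  qed
  have "expectation (\<lambda>\<omega>. (frac_deg kn chi n d \<omega> - c)\<^sup>2)
      = (p - q) / card (nodes kn n) + (q - p\<^sup>2) + (p - c)\<^sup>2"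
    unfolding frac_deg_eq_average
  proof (rule mean_square_deviation_of_average[where B = 1])
    show "finite (nodes kn n)" and "nodes kn n \<noteq> {}"
      using one_two_in_nodes by (auto simp: nodes_def)
  qed (auto simp: I_measurable abs_ind_eq_le_1 I_mean ind_eq_mult_self q_def
        expectation_ind_degree_pair)
  also have "\<dots> = 1 / kn n * (p - p\<^sup>2) + (1 - 1 / kn n) * (q - p\<^sup>2) + (p - c)\<^sup>2"
    using two_le_nodes by (simp add: nodes_def field_simps)
  finally show ?thesis
    by (simp only: cov)
qed

lemma frac_deg_variance_nonneg:
  fixes d :: nat
  defines "p \<equiv> prob {\<omega> \<in> space M. degree kn chi n 1 \<omega> = d}"
  shows "0 \<le> 1 / kn n * (p - p\<^sup>2)
    + (1 - 1 / kn n) * covariance M (ind_eq (degree kn chi n 1) d) (ind_eq (degree kn chi n 2) d)"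
proof -
  have "0 \<le> expectation (\<lambda>\<omega>. (frac_deg kn chi n d \<omega> - p)\<^sup>2)"
    by simp
  then show ?thesis
    by (simp add: mean_square_frac_deg p_def)
qed

end

theorem proposition1:
  fixes M :: "'a measure"
    and kn :: "nat \<Rightarrow> nat"
    and chi :: "nat \<Rightarrow> nat \<Rightarrow> nat \<Rightarrow> 'a \<Rightarrow> bool"
    and d :: nat and L :: real
  assumes "prob_space M"
    and meas: "\<And>n k l. n \<ge> 2 \<Longrightarrow> k \<in> nodes kn n \<Longrightarrow> l \<in> nodes kn n \<Longrightarrow>
                 chi n k l \<in> measurable M (count_space UNIV)"
    and kn_ge: "\<And>n. n \<ge> 2 \<Longrightarrow> kn n \<ge> 2"
    and kn_inf: "filterlim kn at_top sequentially"
    and hom1: "\<And>n k. n \<ge> 2 \<Longrightarrow> k \<in> nodes kn n \<Longrightarrow>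
                 distr M (count_space UNIV) (degree kn chi n k)
                 = distr M (count_space UNIV) (degree kn chi n 1)"
    and hom2: "\<And>n k l. n \<ge> 2 \<Longrightarrow> k \<in> nodes kn n \<Longrightarrow> l \<in> nodes kn n \<Longrightarrow> k \<noteq> l \<Longrightarrow>
                 distr M (count_space UNIV) (\<lambda>\<omega>. (degree kn chi n k \<omega>, degree kn chi n l \<omega>))
                 = distr M (count_space UNIV) (\<lambda>\<omega>. (degree kn chi n 1 \<omega>, degree kn chi n 2 \<omega>))"
  shows "conv_in_prob M (\<lambda>n. frac_deg kn chi n d) L \<longleftrightarrow>
           ((\<lambda>n. measure M {\<omega> \<in> space M. degree kn chi n 1 \<omega> = d}) \<longlonglongrightarrow> L \<and>
            (\<lambda>n. covariance M (ind_eq (degree kn chi n 1) d) (ind_eq (degree kn chi n 2) d))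
              \<longlonglongrightarrow> 0)"
proof -
  interpret prob_space M by fact
  have hom: "homogeneous_degrees M kn chi n" if "n \<ge> 2" for n
    using assms that unfolding homogeneous_degrees_def homogeneous_degrees_axioms_def by auto
  define p where "p n = prob {\<omega> \<in> space M. degree kn chi n 1 \<omega> = d}" for n
  define cov where
    "cov n = covariance M (ind_eq (degree kn chi n 1) d) (ind_eq (degree kn chi n 2) d)" for n
  have large: "\<forall>\<^sub>F n in sequentially. 2 \<le> n"
    by (rule eventually_ge_at_top)
  have "\<forall>\<^sub>F n in sequentially. frac_deg kn chi n d \<in> borel_measurable M
      \<and> (\<forall>\<omega>. \<bar>frac_deg kn chi n d \<omega> - L\<bar> \<le> 1 + \<bar>L\<bar>)"
    using large by eventually_elim
      (simp add: homogeneous_degrees.frac_deg_measurable[OF hom] abs_frac_deg_minus_le)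
  note mean_square = conv_in_prob_iff_mean_square_tendsto[OF this]
  have decomp: "\<forall>\<^sub>F n in sequentially. expectation (\<lambda>\<omega>. (frac_deg kn chi n d \<omega> - L)\<^sup>2)
      = 1 / kn n * (p n - (p n)\<^sup>2) + (1 - 1 / kn n) * cov n + (p n - L)\<^sup>2"
    using large by eventually_elim
      (simp add: homogeneous_degrees.mean_square_frac_deg[OF hom] p_def cov_def)
  have nonneg: "\<forall>\<^sub>F n in sequentially. 0 \<le> 1 / kn n * (p n - (p n)\<^sup>2) + (1 - 1 / kn n) * cov n"
    using large by eventually_elim
      (unfold p_def cov_def, rule homogeneous_degrees.frac_deg_variance_nonneg[OF hom])
  have weight: "(\<lambda>n. 1 / real (kn n)) \<longlonglongrightarrow> 0"
    using tendsto_inverse_0_at_top[OF filterlim_compose[OF filterlim_real_sequentially kn_inf]]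
    by (simp add: inverse_eq_divide)
  have bounded: "\<bar>p n - (p n)\<^sup>2\<bar> \<le> 1" for n
    by (simp add: abs_minus_square_le_1 p_def)
  show ?thesis
    unfolding mean_square tendsto_bias_variance_iff[OF decomp nonneg weight bounded]
    by (simp add: p_def[abs_def] cov_def[abs_def])
qed

end
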